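(* In the setting described in the context, the service placement $X^\psi$ output by algorithm SA1 has total reward $\sum_{k\in U}f_\psi(k)w_k\ge\mathbb E\left[\sum_{k\in U}f_\tau(k)w_k\right]$, where the expectation is over the random slot allocation $\tau$.
   Context: An SPSC instance: finite sets $S$ (services), $V$ (nodes), $U$ (users); sizes $s_i>0$; capacities $c_j>0$; for each user $k$ a service $i_k\in S$, a set $T_k\subseteq V$, a reward $w_k>0$. Total reward of a placement $X=\{X_i\subseteq V\}$: $\sum_kw_k\mathbf 1[T_k\cap X_{i_k}\ne\emptyset]$. Let $\{x_{ij}\},\{y_k\}$ be an optimal solution of the LP with nonnegative variables: maximize $\sum_ky_kw_k$ s.t. $y_k\le\sum_{j\in T_k}x_{i_kj}$, $y_k\le1$; $\sum_ix_{ij}s_i\le c_j$; $x_{ij}=0$ if $s_i>c_j$; $0\le x_{ij}\le1$. Fix $\beta<1$ with $\max_is_i\le\beta\min_jc_j$; $\gamma:=1-\sqrt\beta$, $\delta:=(1-\sqrt\beta)^2$, $\mathbb N=\{1,2,\dots\}$. For $j\in V,q\in\mathbb N$: $P_j^q:=\{i:\gamma^qc_j\beta<s_i\le\gamma^{q-1}c_j\beta\}$, $d_j^q:=\sum_{i\in P_j^q}x_{ij}$, $v_j:=\delta c_j/\sum_is_ix_{ij}$, $n_j^q:=\lceil v_jd_j^q\rceil$. Slot set $\Lambda$: for every $j,q$ with $P_j^q\ne\emptyset$, $n_j^q$ slots $\sigma$ with node $\nu(\sigma)=j$, class $\kappa(\sigma)=q$. A slot allocation is $\tau:\Lambda\to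 S$ with $\tau(\sigma)\in P^{\kappa(\sigma)}_{\nu(\sigma)}$; $X^\tau_i:=\{j:\exists\sigma,\nu(\sigma)=j,\tau(\sigma)=i\}$; $f_\tau(k):=\mathbf 1[T_k\cap X^\tau_{i_k}\ne\emptyset]$. Random slot allocation: each slot $\sigma$ independently gets $\tau(\sigma)=i$ with probability $x_{i\nu(\sigma)}/d^{\kappa(\sigma)}_{\nu(\sigma)}$, $i\in P^{\kappa(\sigma)}_{\nu(\sigma)}$. A partial slot allocation is $\tau':\Lambda\to S\cup\{\emptyset\}$ with $\tau'(\sigma)\in P^{\kappa(\sigma)}_{\nu(\sigma)}\cup\{\emptyset\}$; $A(\tau')$ is the set of slot allocations agreeing with $\tau'$ wherever $\tau'(\sigma)\ne\emptyset$; $E(\tau'):=\mathbb E[\sum_kf_\tau(k)w_k\mid\tau\in A(\tau')]$. Algorithm SA1: start with $\tau'(\sigma)=\emptyset$ for all $\sigma$; process the slots one at a time; for the current slot $\sigma$ and each $i\in P^{\kappa(\sigma)}_{\nu(\sigma)}$ let $\tau'_i$ be $\tau'$ with $\sigma$ assigned $i$, choose $i'$ maximizing $E(\tau'_i)$, set $\tau'(\sigma):=i'$. When all slots are assigned let $\psi:=\tau'$ and output $X^\psi$. *)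

theory Defs
  imports Complex_Main "HOL-Library.FuncSet"
begin

text \<open>Services 's, nodes 'v, users 'u. S, V, U finite carriers; s sizes, c capacities;
  isvc k = i_k, T k = T_k, w k = w_k.\<close>

definition lp_feasible ::
  "'s set \<Rightarrow> 'v set \<Rightarrow> 'u set \<Rightarrow> ('s \<Rightarrow> real) \<Rightarrow> ('v \<Rightarrow> real) \<Rightarrow>
   ('u \<Rightarrow> 's) \<Rightarrow> ('u \<Rightarrow> 'v set) \<Rightarrow> ('s \<Rightarrow> 'v \<Rightarrow> real) \<Rightarrow> ('u \<Rightarrow> real) \<Rightarrow> bool" where
  "lp_feasible S V U s c isvc T x y \<longleftrightarrow>
     (\<forall>k\<in>U. 0 \<le> y k \<and> y k \<le> (\<Sum>j\<in>T k. x (isvc k) j) \<and> y k \<le> 1) \<and>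
     (\<forall>j\<in>V. (\<Sum>i\<in>S. x i j * s i) \<le> c j) \<and>
     (\<forall>i\<in>S. \<forall>j\<in>V. s i > c j \<longrightarrow> x i j = 0) \<and>
     (\<forall>i\<in>S. \<forall>j\<in>V. 0 \<le> x i j \<and> x i j \<le> 1)"

definition lp_objective :: "'u set \<Rightarrow> ('u \<Rightarrow> real) \<Rightarrow> ('u \<Rightarrow> real) \<Rightarrow> real" where
  "lp_objective U w y = (\<Sum>k\<in>U. y k * w k)"

definition lp_optimal ::
  "'s set \<Rightarrow> 'v set \<Rightarrow> 'u set \<Rightarrow> ('s \<Rightarrow> real) \<Rightarrow> ('v \<Rightarrow> real) \<Rightarrow>
   ('u \<Rightarrow> 's) \<Rightarrow> ('u \<Rightarrow> 'v set) \<Rightarrow> ('u \<Rightarrow> real) \<Rightarrow> ('s \<Rightarrow> 'v \<Rightarrow> real) \<Rightarrow> ('u \<Rightarrow> real) \<Rightarrow> bool" where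
  "lp_optimal S V U s c isvc T w x y \<longleftrightarrow>
     lp_feasible S V U s c isvc T x y \<and>
     (\<forall>x' y'. lp_feasible S V U s c isvc T x' y' \<longrightarrow> lp_objective U w y' \<le> lp_objective U w y)"

definition gam :: "real \<Rightarrow> real" where "gam \<beta> = 1 - sqrt \<beta>"
definition dlt :: "real \<Rightarrow> real" where "dlt \<beta> = (1 - sqrt \<beta>)^2"

definition Pcls :: "'s set \<Rightarrow> ('s \<Rightarrow> real) \<Rightarrow> ('v \<Rightarrow> real) \<Rightarrow> real \<Rightarrow> 'v \<Rightarrow> nat \<Rightarrow> 's set" where
  "Pcls S s c \<beta> j q = {i\<in>S. gam \<beta> ^ q * c j * \<beta> < s i \<and> s i \<le> gam \<beta> ^ (q - 1) * c j * \<beta>}"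

definition dcls :: "'s set \<Rightarrow> ('s \<Rightarrow> real) \<Rightarrow> ('v \<Rightarrow> real) \<Rightarrow> real \<Rightarrow> ('s \<Rightarrow> 'v \<Rightarrow> real) \<Rightarrow> 'v \<Rightarrow> nat \<Rightarrow> real" where
  "dcls S s c \<beta> x j q = (\<Sum>i\<in>Pcls S s c \<beta> j q. x i j)"

definition vnode :: "'s set \<Rightarrow> ('s \<Rightarrow> real) \<Rightarrow> ('v \<Rightarrow> real) \<Rightarrow> real \<Rightarrow> ('s \<Rightarrow> 'v \<Rightarrow> real) \<Rightarrow> 'v \<Rightarrow> real" where
  "vnode S s c \<beta> x j = dlt \<beta> * c j / (\<Sum>i\<in>S. s i * x i j)"

definition ncls :: "'s set \<Rightarrow> ('s \<Rightarrow> real) \<Rightarrow> ('v \<Rightarrow> real) \<Rightarrow> real \<Rightarrow> ('s \<Rightarrow> 'v \<Rightarrow> real) \<Rightarrow> 'v \<Rightarrow> nat \<Rightarrow> nat" where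
  "ncls S s c \<beta> x j q = nat \<lceil>vnode S s c \<beta> x j * dcls S s c \<beta> x j q\<rceil>"

text \<open>Slots are triples (j, q, m): the m-th slot (m < n_j^q) of node j and class q.\<close>
type_synonym 'v slot = "'v \<times> nat \<times> nat"

definition nu :: "'v slot \<Rightarrow> 'v" where "nu \<sigma> = fst \<sigma>"
definition kappa :: "'v slot \<Rightarrow> nat" where "kappa \<sigma> = fst (snd \<sigma>)"

definition Slots :: "'s set \<Rightarrow> 'v set \<Rightarrow> ('s \<Rightarrow> real) \<Rightarrow> ('v \<Rightarrow> real) \<Rightarrow> real \<Rightarrow> ('s \<Rightarrow> 'v \<Rightarrow> real) \<Rightarrow> 'v slot set" where
  "Slots S V s c \<beta> x = {(j, q, m). j \<in> V \<and> 1 \<le> q \<and> Pcls S s c \<beta> j q \<noteq> {} \<and> m < ncls S s c \<beta> x j q}"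

definition adm :: "'s set \<Rightarrow> ('s \<Rightarrow> real) \<Rightarrow> ('v \<Rightarrow> real) \<Rightarrow> real \<Rightarrow> 'v slot \<Rightarrow> 's set" where
  "adm S s c \<beta> \<sigma> = Pcls S s c \<beta> (nu \<sigma>) (kappa \<sigma>)"

definition allocs :: "'s set \<Rightarrow> 'v set \<Rightarrow> ('s \<Rightarrow> real) \<Rightarrow> ('v \<Rightarrow> real) \<Rightarrow> real \<Rightarrow> ('s \<Rightarrow> 'v \<Rightarrow> real) \<Rightarrow> ('v slot \<Rightarrow> 's) set" where
  "allocs S V s c \<beta> x = PiE (Slots S V s c \<beta> x) (adm S s c \<beta>)"

definition placement_of :: "'v slot set \<Rightarrow> ('v slot \<Rightarrow> 's) \<Rightarrow> 's \<Rightarrow> 'v set" where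
  "placement_of L \<tau> i = {j. \<exists>\<sigma>\<in>L. nu \<sigma> = j \<and> \<tau> \<sigma> = i}"

definition total_reward :: "'u set \<Rightarrow> ('u \<Rightarrow> 's) \<Rightarrow> ('u \<Rightarrow> 'v set) \<Rightarrow> ('u \<Rightarrow> real) \<Rightarrow> ('s \<Rightarrow> 'v set) \<Rightarrow> real" where
  "total_reward U isvc T w X = (\<Sum>k\<in>U. w k * (if T k \<inter> X (isvc k) \<noteq> {} then 1 else 0))"

definition slot_prob :: "'s set \<Rightarrow> ('s \<Rightarrow> real) \<Rightarrow> ('v \<Rightarrow> real) \<Rightarrow> real \<Rightarrow> ('s \<Rightarrow> 'v \<Rightarrow> real) \<Rightarrow> 'v slot \<Rightarrow> 's \<Rightarrow> real" where
  "slot_prob S s c \<beta> x \<sigma> i = x i (nu \<sigma>) / dcls S s c \<beta> x (nu \<sigma>) (kappa \<sigma>)"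

definition compl_allocs :: "'s set \<Rightarrow> 'v set \<Rightarrow> ('s \<Rightarrow> real) \<Rightarrow> ('v \<Rightarrow> real) \<Rightarrow> real \<Rightarrow> ('s \<Rightarrow> 'v \<Rightarrow> real) \<Rightarrow>
   ('v slot \<Rightarrow> 's option) \<Rightarrow> ('v slot \<Rightarrow> 's) set" where
  "compl_allocs S V s c \<beta> x \<tau>' =
     {\<tau> \<in> allocs S V s c \<beta> x. \<forall>\<sigma>\<in>Slots S V s c \<beta> x. \<forall>i. \<tau>' \<sigma> = Some i \<longrightarrow> \<tau> \<sigma> = i}"

text \<open>E(tau'): expected reward of the random slot allocation conditioned on agreeing with tau'
  (the slots are independent, so the unassigned slots keep their distribution).\<close>
definition cond_exp :: "'s set \<Rightarrow> 'v set \<Rightarrow> 'u set \<Rightarrow> ('s \<Rightarrow> real) \<Rightarrow> ('v \<Rightarrow> real) \<Rightarrow>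
   ('u \<Rightarrow> 's) \<Rightarrow> ('u \<Rightarrow> 'v set) \<Rightarrow> ('u \<Rightarrow> real) \<Rightarrow> real \<Rightarrow> ('s \<Rightarrow> 'v \<Rightarrow> real) \<Rightarrow>
   ('v slot \<Rightarrow> 's option) \<Rightarrow> real" where
  "cond_exp S V U s c isvc T w \<beta> x \<tau>' =
     (\<Sum>\<tau>\<in>compl_allocs S V s c \<beta> x \<tau>'.
        (\<Prod>\<sigma>\<in>{\<sigma>\<in>Slots S V s c \<beta> x. \<tau>' \<sigma> = None}. slot_prob S s c \<beta> x \<sigma> (\<tau> \<sigma>)) *
        total_reward U isvc T w (placement_of (Slots S V s c \<beta> x) \<tau>))"

definition exp_reward :: "'s set \<Rightarrow> 'v set \<Rightarrow> 'u set \<Rightarrow> ('s \<Rightarrow> real) \<Rightarrow> ('v \<Rightarrow> real) \<Rightarrow>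
   ('u \<Rightarrow> 's) \<Rightarrow> ('u \<Rightarrow> 'v set) \<Rightarrow> ('u \<Rightarrow> real) \<Rightarrow> real \<Rightarrow> ('s \<Rightarrow> 'v \<Rightarrow> real) \<Rightarrow> real" where
  "exp_reward S V U s c isvc T w \<beta> x =
     (\<Sum>\<tau>\<in>allocs S V s c \<beta> x.
        (\<Prod>\<sigma>\<in>Slots S V s c \<beta> x. slot_prob S s c \<beta> x \<sigma> (\<tau> \<sigma>)) *
        total_reward U isvc T w (placement_of (Slots S V s c \<beta> x) \<tau>))"

text \<open>greedy_run S V U s c isvc T w beta x ord t r: processing the slots in list ord,
  starting from partial allocation t, SA1 may end in r (any maximiser may be chosen).\<close>
inductive greedy_run :: "'s set \<Rightarrow> 'v set \<Rightarrow> 'u set \<Rightarrow> ('s \<Rightarrow> real) \<Rightarrow> ('v \<Rightarrow> real) \<Rightarrow>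
   ('u \<Rightarrow> 's) \<Rightarrow> ('u \<Rightarrow> 'v set) \<Rightarrow> ('u \<Rightarrow> real) \<Rightarrow> real \<Rightarrow> ('s \<Rightarrow> 'v \<Rightarrow> real) \<Rightarrow>
   'v slot list \<Rightarrow> ('v slot \<Rightarrow> 's option) \<Rightarrow> ('v slot \<Rightarrow> 's option) \<Rightarrow> bool"
  for S V U s c isvc T w \<beta> x where
  Nil: "greedy_run S V U s c isvc T w \<beta> x [] t t"
| Cons: "\<lbrakk> i \<in> adm S s c \<beta> \<sigma>;
          \<forall>i'\<in>adm S s c \<beta> \<sigma>. cond_exp S V U s c isvc T w \<beta> x (t(\<sigma> := Some i'))
                             \<le> cond_exp S V U s c isvc T w \<beta> x (t(\<sigma> := Some i));
          greedy_run S V U s c isvc T w \<beta> x ord (t(\<sigma> := Some i)) r \<rbrakk>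
        \<Longrightarrow> greedy_run S V U s c isvc T w \<beta> x (\<sigma> # ord) t r"

definition SA1_result :: "'s set \<Rightarrow> 'v set \<Rightarrow> 'u set \<Rightarrow> ('s \<Rightarrow> real) \<Rightarrow> ('v \<Rightarrow> real) \<Rightarrow>
   ('u \<Rightarrow> 's) \<Rightarrow> ('u \<Rightarrow> 'v set) \<Rightarrow> ('u \<Rightarrow> real) \<Rightarrow> real \<Rightarrow> ('s \<Rightarrow> 'v \<Rightarrow> real) \<Rightarrow>
   ('v slot \<Rightarrow> 's option) \<Rightarrow> bool" where
  "SA1_result S V U s c isvc T w \<beta> x \<psi> \<longleftrightarrow>
     (\<exists>ord. distinct ord \<and> set ord = Slots S V s c \<beta> x \<and>
            greedy_run S V U s c isvc T w \<beta> x ord (\<lambda>_. None) \<psi>)"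

definition placement_of_partial :: "'v slot set \<Rightarrow> ('v slot \<Rightarrow> 's option) \<Rightarrow> 's \<Rightarrow> 'v set" where
  "placement_of_partial L \<psi> i = {j. \<exists>\<sigma>\<in>L. nu \<sigma> = j \<and> \<psi> \<sigma> = Some i}"

end

theory Submission
  imports Defs
begin

text \<open>Method of conditional expectations. Since the slots are assigned independently, the
  conditional expectation of a partial allocation is the convex combination, with the slot
  probabilities as weights, of the conditional expectations of its one-slot extensions. A
  maximising extension therefore never lowers the conditional expectation, so along the run of
  SA1 it grows from the unconditional expectation to the conditional expectation of the final,
  complete allocation, which is just the reward of the placement it induces.\<close>

lemma convex_combination_le_max:
  fixes p f :: "'a \<Rightarrow> real"
  assumes "sum p A = 1" "\<forall>i\<in>A. 0 \<le> p i" "\<forall>i\<in>A. f i \<le> f i0"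
  shows "(\<Sum>i\<in>A. p i * f i) \<le> f i0"
proof -
  have "(\<Sum>i\<in>A. p i * f i) \<le> (\<Sum>i\<in>A. p i * f i0)"
    using assms(2,3) by (intro sum_mono mult_left_mono) auto
  also have "\<dots> = f i0"
    using assms(1) by (simp add: sum_distrib_right[symmetric])
  finally show ?thesis .
qed

context
  fixes S :: "'s set" and V :: "'v set" and U :: "'u set"
    and s :: "'s \<Rightarrow> real" and c :: "'v \<Rightarrow> real"
    and isvc :: "'u \<Rightarrow> 's" and T :: "'u \<Rightarrow> 'v set" and w :: "'u \<Rightarrow> real"
    and x :: "'s \<Rightarrow> 'v \<Rightarrow> real" and \<beta> :: real
begin

lemma adm_subset: "adm S s c \<beta> \<sigma> \<subseteq> S"
  unfolding adm_def Pcls_def by auto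

lemma finite_compl_allocs:
  assumes "finite (Slots S V s c \<beta> x)" "finite S"
  shows "finite (compl_allocs S V s c \<beta> x t)"
proof -
  have "finite (allocs S V s c \<beta> x)"
    unfolding allocs_def using assms(1) finite_subset[OF adm_subset assms(2)] by (rule finite_PiE)
  then show ?thesis unfolding compl_allocs_def by simp
qed

lemma slot_prob_distribution:
  assumes "\<forall>i\<in>S. \<forall>j\<in>V. 0 \<le> x i j" and "\<sigma> \<in> Slots S V s c \<beta> x"
  shows "(\<Sum>i\<in>adm S s c \<beta> \<sigma>. slot_prob S s c \<beta> x \<sigma> i) = 1"
    and "\<forall>i\<in>adm S s c \<beta> \<sigma>. 0 \<le> slot_prob S s c \<beta> x \<sigma> i"
proof -
  obtain j q m where \<sigma>: "\<sigma> = (j, q, m)" "j \<in> V" "m < ncls S s c \<beta> x j q"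
    using assms(2) unfolding Slots_def by auto
  \<comment> \<open>a slot of class q at node j exists only if n_j^q > 0, which forces d_j^q \<noteq> 0\<close>
  have "dcls S s c \<beta> x j q \<noteq> 0"
    using \<sigma>(3) unfolding ncls_def by auto
  then show "(\<Sum>i\<in>adm S s c \<beta> \<sigma>. slot_prob S s c \<beta> x \<sigma> i) = 1"
    unfolding slot_prob_def adm_def \<sigma> nu_def kappa_def
    by (simp add: sum_divide_distrib[symmetric] dcls_def)
  have "0 \<le> dcls S s c \<beta> x j q"
    unfolding dcls_def using assms(1) \<sigma> by (intro sum_nonneg) (auto simp: Pcls_def)
  then show "\<forall>i\<in>adm S s c \<beta> \<sigma>. 0 \<le> slot_prob S s c \<beta> x \<sigma> i"
    unfolding slot_prob_def adm_def \<sigma> nu_def kappa_def using assms(1) \<sigma>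
    by (auto simp: Pcls_def)
qed

lemma cond_exp_split_slot:
  assumes fin: "finite (Slots S V s c \<beta> x)" "finite S"
    and \<sigma>: "\<sigma> \<in> Slots S V s c \<beta> x" "t \<sigma> = None"
  shows "cond_exp S V U s c isvc T w \<beta> x t =
    (\<Sum>i\<in>adm S s c \<beta> \<sigma>. slot_prob S s c \<beta> x \<sigma> i * cond_exp S V U s c isvc T w \<beta> x (t(\<sigma> := Some i)))"
proof -
  define L where "L = Slots S V s c \<beta> x"
  define p where "p = slot_prob S s c \<beta> x"
  define R where "R = (\<lambda>\<tau>. total_reward U isvc T w (placement_of L \<tau>))"
  define weight where "weight t' \<tau> = (\<Prod>\<sigma>'\<in>{\<sigma>'\<in>L. t' \<sigma>' = None}. p \<sigma>' (\<tau> \<sigma>'))"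
    for t' :: "'v slot \<Rightarrow> 's option" and \<tau>
  let ?C = "compl_allocs S V s c \<beta> x"
  have cond_exp_eq: "cond_exp S V U s c isvc T w \<beta> x t' = (\<Sum>\<tau>\<in>?C t'. weight t' \<tau> * R \<tau>)" for t'
    unfolding cond_exp_def weight_def R_def p_def L_def ..
  have slot_values: "(\<lambda>\<tau>. \<tau> \<sigma>) ` ?C t \<subseteq> adm S s c \<beta> \<sigma>"
    using \<sigma> unfolding compl_allocs_def allocs_def by (auto intro: PiE_mem)
  have finite_adm: "finite (adm S s c \<beta> \<sigma>)"
    using fin adm_subset finite_subset by blast
  have grouped: "(\<Sum>\<tau>\<in>?C t. weight t \<tau> * R \<tau>) =
      (\<Sum>i\<in>adm S s c \<beta> \<sigma>. \<Sum>\<tau>\<in>{\<tau>\<in>?C t. \<tau> \<sigma> = i}. weight t \<tau> * R \<tau>)"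
    using sum.group[OF finite_compl_allocs[OF fin] finite_adm slot_values,
        of "\<lambda>\<tau>. weight t \<tau> * R \<tau>"] by simp
  have "(\<Sum>\<tau>\<in>{\<tau>\<in>?C t. \<tau> \<sigma> = i}. weight t \<tau> * R \<tau>)
      = p \<sigma> i * cond_exp S V U s c isvc T w \<beta> x (t(\<sigma> := Some i))" for i
  proof -
    have fibre: "{\<tau>\<in>?C t. \<tau> \<sigma> = i} = ?C (t(\<sigma> := Some i))"
      using \<sigma> unfolding compl_allocs_def by auto
    have free: "{\<sigma>'\<in>L. t \<sigma>' = None} = insert \<sigma> {\<sigma>'\<in>L. (t(\<sigma> := Some i)) \<sigma>' = None}"
      using \<sigma> unfolding L_def by auto
    have "weight t \<tau> = p \<sigma> i * weight (t(\<sigma> := Some i)) \<tau>" if "\<tau> \<in> ?C (t(\<sigma> := Some i))" for \<tau>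
    proof -
      have "\<tau> \<sigma> = i" using that \<sigma> unfolding compl_allocs_def by auto
      moreover have "finite {\<sigma>'\<in>L. (t(\<sigma> := Some i)) \<sigma>' = None}" using fin unfolding L_def by simp
      ultimately show ?thesis unfolding weight_def free by simp
    qed
    then show ?thesis
      unfolding fibre cond_exp_eq sum_distrib_left by (auto intro: sum.cong simp: mult.assoc)
  qed
  then show ?thesis
    unfolding cond_exp_eq[of t] grouped p_def by simp
qed

lemma greedy_run_unchanged:
  "greedy_run S V U s c isvc T w \<beta> x ord t r \<Longrightarrow> \<sigma> \<notin> set ord \<Longrightarrow> r \<sigma> = t \<sigma>"
  by (induction rule: greedy_run.induct) auto

lemma greedy_run_assigns:
  "greedy_run S V U s c isvc T w \<beta> x ord t r \<Longrightarrow>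
     \<forall>\<sigma>\<in>set ord. \<exists>i\<in>adm S s c \<beta> \<sigma>. r \<sigma> = Some i"
proof (induction rule: greedy_run.induct)
  case (Cons i \<sigma> t ord r)
  then show ?case
    using greedy_run_unchanged[OF Cons.hyps(3), of \<sigma>] by (cases "\<sigma> \<in> set ord") auto
qed simp

lemma cond_exp_le_greedy_run:
  assumes "greedy_run S V U s c isvc T w \<beta> x ord t r"
    and "finite (Slots S V s c \<beta> x)" "finite S" "\<forall>i\<in>S. \<forall>j\<in>V. 0 \<le> x i j"
    and "set ord \<subseteq> Slots S V s c \<beta> x" "distinct ord" "\<forall>\<sigma>\<in>set ord. t \<sigma> = None"
  shows "cond_exp S V U s c isvc T w \<beta> x t \<le> cond_exp S V U s c isvc T w \<beta> x r"
  using assms(1,5-7)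
proof (induction rule: greedy_run.induct)
  case (Cons i \<sigma> t ord r)
  let ?E = "cond_exp S V U s c isvc T w \<beta> x"
  have \<sigma>: "\<sigma> \<in> Slots S V s c \<beta> x" "t \<sigma> = None" using Cons.prems by auto
  have "?E t = (\<Sum>i'\<in>adm S s c \<beta> \<sigma>. slot_prob S s c \<beta> x \<sigma> i' * ?E (t(\<sigma> := Some i')))"
    using cond_exp_split_slot[of \<sigma> t, OF assms(2,3) \<sigma>] .
  also have "\<dots> \<le> ?E (t(\<sigma> := Some i))"
    using Cons.hyps(2) slot_prob_distribution[OF assms(4) \<sigma>(1)]
    by (intro convex_combination_le_max) auto
  also have "\<dots> \<le> ?E r"
    using Cons.prems by (intro Cons.IH) auto
  finally show ?case .
qed simp

lemma exp_reward_eq_cond_exp_empty: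
  "exp_reward S V U s c isvc T w \<beta> x = cond_exp S V U s c isvc T w \<beta> x (\<lambda>_. None)"
  unfolding exp_reward_def cond_exp_def compl_allocs_def by simp

lemma cond_exp_complete:
  assumes "\<forall>\<sigma>\<in>Slots S V s c \<beta> x. \<exists>i\<in>adm S s c \<beta> \<sigma>. \<psi> \<sigma> = Some i"
  shows "cond_exp S V U s c isvc T w \<beta> x \<psi>
    = total_reward U isvc T w (placement_of_partial (Slots S V s c \<beta> x) \<psi>)"
proof -
  define L where "L = Slots S V s c \<beta> x"
  define \<tau> where "\<tau> = restrict (\<lambda>\<sigma>. the (\<psi> \<sigma>)) L"
  have assigned: "\<forall>\<sigma>\<in>L. \<exists>i\<in>adm S s c \<beta> \<sigma>. \<psi> \<sigma> = Some i"
    using assms unfolding L_def .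
  have "compl_allocs S V s c \<beta> x \<psi> = {\<tau>}"
    using assigned unfolding compl_allocs_def allocs_def L_def[symmetric] \<tau>_def
    by (auto simp: PiE_def extensional_def intro!: ext) (metis option.sel)
  moreover have no_free_slot: "{\<sigma>\<in>L. \<psi> \<sigma> = None} = {}"
    using assigned by auto
  moreover have "placement_of L \<tau> = placement_of_partial L \<psi>"
    unfolding placement_of_def placement_of_partial_def \<tau>_def using assigned by (intro ext) force
  ultimately show ?thesis
    unfolding cond_exp_def L_def[symmetric] no_free_slot by simp
qed

end

theorem theorem6:
  fixes S :: "'s set" and V :: "'v set" and U :: "'u set"
    and s :: "'s \<Rightarrow> real" and c :: "'v \<Rightarrow> real"
    and isvc :: "'u \<Rightarrow> 's" and T :: "'u \<Rightarrow> 'v set" and w :: "'u \<Rightarrow> real"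
    and x :: "'s \<Rightarrow> 'v \<Rightarrow> real" and y :: "'u \<Rightarrow> real"
    and \<beta> :: real and \<psi> :: "'v slot \<Rightarrow> 's option"
  assumes "finite S" "finite V" "finite U"
    and "\<forall>i\<in>S. s i > 0" "\<forall>j\<in>V. c j > 0"
    and "\<forall>k\<in>U. isvc k \<in> S \<and> T k \<subseteq> V \<and> w k > 0"
    and "lp_optimal S V U s c isvc T w x y"
    and "\<beta> < 1" "\<forall>i\<in>S. \<forall>j\<in>V. s i \<le> \<beta> * c j"
    and "SA1_result S V U s c isvc T w \<beta> x \<psi>"
  shows "total_reward U isvc T w (placement_of_partial (Slots S V s c \<beta> x) \<psi>)
           \<ge> exp_reward S V U s c isvc T w \<beta> x"
proof -
  obtain ord where ord: "distinct ord" "set ord = Slots S V s c \<beta> x"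
    "greedy_run S V U s c isvc T w \<beta> x ord (\<lambda>_. None) \<psi>"
    using assms(10) unfolding SA1_result_def by blast
  have x_nonneg: "\<forall>i\<in>S. \<forall>j\<in>V. 0 \<le> x i j"
    using assms(7) unfolding lp_optimal_def lp_feasible_def by blast
  have "exp_reward S V U s c isvc T w \<beta> x = cond_exp S V U s c isvc T w \<beta> x (\<lambda>_. None)"
    by (rule exp_reward_eq_cond_exp_empty)
  also have "\<dots> \<le> cond_exp S V U s c isvc T w \<beta> x \<psi>"
    using ord assms(1) x_nonneg
    by (intro cond_exp_le_greedy_run[OF ord(3)]) (auto simp flip: ord(2))
  also have "\<dots> = total_reward U isvc T w (placement_of_partial (Slots S V s c \<beta> x) \<psi>)"
    using greedy_run_assigns[OF ord(3)] ord(2) by (intro cond_exp_complete) simp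
  finally show ?thesis .
qed

end
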